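(* Let $\sigma$, $\nu$, $\alpha$ and $c$ be as in the second-order ergodic theorem for admissible substitutions (see context). Then for every $b\in\mathcal B$ and $\nu$-a.e. $x=(x_k)_{k\in\mathbb Z}\in X_\sigma$, $$\lim_{n\to\infty}\frac1{\log n}\sum_{1\le k\le n,\ x_k=b}\frac1{k^\alpha}=\alpha\cdot c\cdot\nu([b]).$$
   Context: $\mathcal A=\{1,\dots,N\}$, $\sigma:\mathcal A\to\mathcal A^+$ a substitution; $X_\sigma=\{x\in\mathcal A^{\mathbb Z}:x[-n,n]$ is a subword of some $\sigma^m(a)$, $m\ge1$, for all $n\ge 1\}$ with left shift $S$; $[b]=\{x:x_0=b\}$. $M_\sigma$ has $(a,b)$ entry the number of occurrences of $a$ in $\sigma(b)$. $\sigma$ is admissible if $M_\sigma=\begin{pmatrix}A&C\\0&B\end{pmatrix}$ (suitable ordering) with $A,B$ primitive, $C\ne0$, $\rho(A)>\rho(B)>1$, and, with $\mathcal B$ the letters indexing $B$: each $\sigma(b)$, $b\in\mathcal B$, begins and ends with a letter of $\mathcal B$, and for each $b\in\mathcal B$ some $\sigma^k(b)$ has a letter of $\mathcal B$ at a position other than first and last. $\nu$ is the unique (up to scaling) $\sigma$-finite infinite $S$-invariant measure on $X_\sigma$ with $0<\nu([b])<\infty$ for $b\in\mathcal B$, normalized by $\sum_{b\in\mathcal B}\xi_b\nu([b])=1$, where $\xi_i>0$ satisfy $|\sigma^k(i)|/(\xi_i\rho(A)^k)\to1$. $\alpha=\log\rho(B)/\log\rho(A)$, and $c>0$ is the constant of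 the second-order ergodic theorem: for every $f\in L^1(X_\sigma,\nu)$ and $\nu$-a.e. $x$, $\lim_{n\to\infty}\frac1{\log n}\sum_{k=1}^n\frac{\sum_{i=0}^{k-1}f(S^ix)}{c\,k^{\alpha+1}}=\int f\,d\nu$ (explicitly, $c=\gamma\delta$ with $\delta$ the a.e. value of the right average $\alpha$-dimensional density of $\mathcal H^\alpha$ on the graph-directed sets $K_b$ of the associated tile substitution and $\gamma^{-1}=\sum_{b\in\mathcal B}\nu([b])\mathcal H^\alpha(K_b)$). *)

theory Defs
  imports "HOL-Analysis.Analysis" "HOL-Probability.Probability" "HOL-Library.Sublist"
    "Jordan_Normal_Form.Spectral_Radius" "Jordan_Normal_Form.DL_Submatrix"
begin

definition subst_word :: "(nat \<Rightarrow> nat list) \<Rightarrow> nat list \<Rightarrow> nat list" where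
  "subst_word \<sigma> w = concat (map \<sigma> w)"

definition subst_iter :: "(nat \<Rightarrow> nat list) \<Rightarrow> nat \<Rightarrow> nat \<Rightarrow> nat list" where
  "subst_iter \<sigma> m a = (subst_word \<sigma> ^^ m) [a]"

definition is_substitution :: "nat \<Rightarrow> (nat \<Rightarrow> nat list) \<Rightarrow> bool" where
  "is_substitution N \<sigma> \<longleftrightarrow> (\<forall>a\<in>{1..N}. \<sigma> a \<noteq> [] \<and> set (\<sigma> a) \<subseteq> {1..N})"

definition subshift :: "nat \<Rightarrow> (nat \<Rightarrow> nat list) \<Rightarrow> (int \<Rightarrow> nat) set" where
  "subshift N \<sigma> = {x. \<forall>n::nat. n \<ge> 1 \<longrightarrow>
      (\<exists>m a. m \<ge> 1 \<and> a \<in> {1..N} \<and> sublist (map x [-int n..int n]) (subst_iter \<sigma> m a))}"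

definition shift :: "(int \<Rightarrow> nat) \<Rightarrow> (int \<Rightarrow> nat)" where
  "shift x = (\<lambda>i. x (i + 1))"

definition cyl :: "nat \<Rightarrow> (int \<Rightarrow> nat) set" where
  "cyl b = {x. x 0 = b}"

text \<open>Substitution matrix M_sigma, letter i (1..N) has matrix index i-1;
  entry (a,b) = number of occurrences of a in sigma(b).\<close>
definition subst_mat :: "nat \<Rightarrow> (nat \<Rightarrow> nat list) \<Rightarrow> real mat" where
  "subst_mat N \<sigma> = mat N N (\<lambda>(i,j). real (count_list (\<sigma> (j+1)) (i+1)))"

definition blockA :: "nat \<Rightarrow> (nat \<Rightarrow> nat list) \<Rightarrow> nat set \<Rightarrow> real mat" where
  "blockA N \<sigma> Bs = submatrix (subst_mat N \<sigma>) {i. i + 1 \<notin> Bs} {i. i + 1 \<notin> Bs}"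

definition blockB :: "nat \<Rightarrow> (nat \<Rightarrow> nat list) \<Rightarrow> nat set \<Rightarrow> real mat" where
  "blockB N \<sigma> Bs = submatrix (subst_mat N \<sigma>) {i. i + 1 \<in> Bs} {i. i + 1 \<in> Bs}"

definition blockC :: "nat \<Rightarrow> (nat \<Rightarrow> nat list) \<Rightarrow> nat set \<Rightarrow> real mat" where
  "blockC N \<sigma> Bs = submatrix (subst_mat N \<sigma>) {i. i + 1 \<notin> Bs} {i. i + 1 \<in> Bs}"

definition blockZero :: "nat \<Rightarrow> (nat \<Rightarrow> nat list) \<Rightarrow> nat set \<Rightarrow> real mat" where
  "blockZero N \<sigma> Bs = submatrix (subst_mat N \<sigma>) {i. i + 1 \<in> Bs} {i. i + 1 \<notin> Bs}"

definition primitive_mat :: "real mat \<Rightarrow> bool" where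
  "primitive_mat A \<longleftrightarrow> dim_row A = dim_col A \<and> dim_row A > 0 \<and>
     (\<forall>i<dim_row A. \<forall>j<dim_col A. A $$ (i,j) \<ge> 0) \<and>
     (\<exists>k>0. \<forall>i<dim_row A. \<forall>j<dim_col A. (A ^\<^sub>m k) $$ (i,j) > 0)"

definition rho :: "real mat \<Rightarrow> real" where
  "rho A = spectral_radius (map_mat complex_of_real A)"

definition admissible :: "nat \<Rightarrow> (nat \<Rightarrow> nat list) \<Rightarrow> nat set \<Rightarrow> bool" where
  "admissible N \<sigma> Bs \<longleftrightarrow>
     is_substitution N \<sigma> \<and> Bs \<subseteq> {1..N} \<and> Bs \<noteq> {} \<and> Bs \<noteq> {1..N} \<and>
     primitive_mat (blockA N \<sigma> Bs) \<and> primitive_mat (blockB N \<sigma> Bs) \<and>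
     blockZero N \<sigma> Bs = 0\<^sub>m (dim_row (blockZero N \<sigma> Bs)) (dim_col (blockZero N \<sigma> Bs)) \<and>
     blockC N \<sigma> Bs \<noteq> 0\<^sub>m (dim_row (blockC N \<sigma> Bs)) (dim_col (blockC N \<sigma> Bs)) \<and>
     rho (blockA N \<sigma> Bs) > rho (blockB N \<sigma> Bs) \<and> rho (blockB N \<sigma> Bs) > 1 \<and>
     (\<forall>b\<in>Bs. hd (\<sigma> b) \<in> Bs \<and> last (\<sigma> b) \<in> Bs) \<and>
     (\<forall>b\<in>Bs. \<exists>k i. 0 < i \<and> i + 1 < length (subst_iter \<sigma> k b) \<and> subst_iter \<sigma> k b ! i \<in> Bs)"

definition subshift_space :: "nat \<Rightarrow> (nat \<Rightarrow> nat list) \<Rightarrow> (int \<Rightarrow> nat) measure" where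
  "subshift_space N \<sigma> = restrict_space (Pi\<^sub>M UNIV (\<lambda>_. count_space {1..N})) (subshift N \<sigma>)"

end

theory Submission
  imports Defs "HOL-Real_Asymp.Real_Asymp"
begin

(* Fix a letter b of the lower block and put a_i = 1 if x_i = b, else 0, with
   partial sums S_k = a_0 + ... + a_(k-1).  Applied to the integrable function indicator [b],
   the second-order ergodic theorem says that D_n / ln n tends to c * nu([b]), where
   D_n = sum_(k=1..n) S_k k^(-alpha-1).  The theorem asks for the limit of T_n / ln n with
   T_n = sum_(k=1..n) a_k k^(-alpha), so the whole content is a Tauberian statement about
   0/1-sequences: D_n / ln n -> L implies T_n / ln n -> alpha * L.
   It is proved by Abel summation, which expresses T_n through the differences
   k^(-alpha) - (k+1)^(-alpha) ~ alpha k^(-alpha-1).  This gives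
     alpha D_n - alpha - 1  <=  T_n  <=  alpha D_n + O(1) + 2^(alpha+1) (D_(2n) - D_n),
   where the boundary term S_n n^(-alpha) is controlled by the block D_(2n) - D_n; since
   D_(2n) / ln n has the same limit L, both bounds divided by ln n tend to alpha * L. *)

text \<open>This is what turns Abel summation into a comparison with \<open>D\<^sub>n\<close>.\<close>
lemma powr_decrement_bounds:
  fixes k \<alpha> :: real
  assumes k: "k \<ge> 1" and \<alpha>: "\<alpha> > 0"
  shows "\<alpha> * (k+1) powr (-\<alpha>-1) \<le> k powr (-\<alpha>) - (k+1) powr (-\<alpha>)"
    and "k powr (-\<alpha>) - (k+1) powr (-\<alpha>) \<le> \<alpha> * k powr (-\<alpha>-1)"
proof -
  have deriv: "((\<lambda>t. t powr (-\<alpha>)) has_real_derivative (-\<alpha>) * x powr (-\<alpha>-1)) (at x)"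
    if "k \<le> x" for x
    using that k by (auto intro!: derivative_eq_intros simp: powr_diff field_simps)
  from MVT2[of k "k+1", OF _ deriv] obtain z where z: "k < z" "z < k+1"
    and mvt: "(k+1) powr (-\<alpha>) - k powr (-\<alpha>) = (k+1-k) * ((-\<alpha>) * z powr (-\<alpha>-1))"
    by auto
  have decr: "k powr (-\<alpha>) - (k+1) powr (-\<alpha>) = \<alpha> * z powr (-\<alpha>-1)"
    using mvt by simp
  have "(k+1) powr (-\<alpha>-1) \<le> z powr (-\<alpha>-1)" "z powr (-\<alpha>-1) \<le> k powr (-\<alpha>-1)"
    using z k \<alpha> by (auto intro!: powr_mono2')
  then show "\<alpha> * (k+1) powr (-\<alpha>-1) \<le> k powr (-\<alpha>) - (k+1) powr (-\<alpha>)"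
    and "k powr (-\<alpha>) - (k+1) powr (-\<alpha>) \<le> \<alpha> * k powr (-\<alpha>-1)"
    using decr \<alpha> by (auto intro: mult_left_mono)
qed

lemma abel_summation:
  fixes a w :: "nat \<Rightarrow> 'a::comm_ring"
  defines "S \<equiv> \<lambda>k. \<Sum>i<k. a i"
  assumes "n \<ge> 1"
  shows "(\<Sum>k=1..n. a k * w k)
           = S (n+1) * w n - S 1 * w 1 + (\<Sum>k\<in>{1..<n}. S (k+1) * (w k - w (k+1)))"
  using assms(2)
proof (induction n rule: nat_induct_at_least)
  case base
  show ?case by (simp add: S_def algebra_simps)
next
  case (Suc n)
  have "S (Suc n + 1) = S (n+1) + a (Suc n)" by (simp add: S_def)
  with Suc.IH Suc.hyps show ?case by (simp add: algebra_simps)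
qed

lemma sum_split_first:
  fixes f :: "nat \<Rightarrow> 'a::comm_monoid_add"
  assumes "n \<ge> 1"
  shows "(\<Sum>k=1..n. f k) = f 1 + (\<Sum>k\<in>{1..<n}. f (k+1))"
  using assms
proof (induction n rule: nat_induct_at_least)
  case base then show ?case by simp
next
  case (Suc n) then show ?case by (simp add: add.assoc)
qed

text \<open>For nondecreasing nonnegative \<open>S\<close>, the boundary term \<open>S n n powr -\<alpha>\<close> of the Abel summation is
  dominated by the dyadic block \<open>\<Sum>k\<in>{n<..2n}. S k k powr (-\<alpha>-1)\<close>, since that block has \<open>n\<close>
  terms, each at least \<open>S n (2n) powr (-\<alpha>-1)\<close>.\<close>
lemma boundary_term_le_dyadic_block:
  fixes S :: "nat \<Rightarrow> real" and \<alpha> :: real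
  assumes S_mono: "mono S" and S_nn: "\<And>k. 0 \<le> S k" and \<alpha>: "\<alpha> \<ge> -1" and n: "n \<ge> 1"
  shows "S n * real n powr (-\<alpha>) \<le> 2 powr (\<alpha>+1) * (\<Sum>k\<in>{n<..2*n}. S k * real k powr (-\<alpha>-1))"
proof -
  have "S n * real n powr (-\<alpha>) = 2 powr (\<alpha>+1) * (real n * (S n * real (2*n) powr (-\<alpha>-1)))"
  proof -
    have "real n * real n powr (-\<alpha>-1) = real n powr (-\<alpha>)"
      using n by (simp add: powr_diff powr_minus_divide field_simps)
    moreover have "2 powr (\<alpha>+1) * 2 powr (-\<alpha>-1) = (1::real)"
      by (simp add: powr_add[symmetric])
    ultimately show ?thesis
      by (simp add: powr_mult mult_ac)
  qed
  also have "real n * (S n * real (2*n) powr (-\<alpha>-1)) = (\<Sum>k\<in>{n<..2*n}. S n * real (2*n) powr (-\<alpha>-1))"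
    by simp
  also have "\<dots> \<le> (\<Sum>k\<in>{n<..2*n}. S k * real k powr (-\<alpha>-1))"
  proof (intro sum_mono mult_mono)
    fix k assume k: "k \<in> {n<..2*n}"
    show "S n \<le> S k" using k S_mono by (simp add: monoD)
    show "real (2*n) powr (-\<alpha>-1) \<le> real k powr (-\<alpha>-1)"
      using k \<alpha> by (intro powr_mono2') auto
  qed (use S_nn in auto)
  finally show ?thesis by (simp add: mult_left_mono)
qed

lemma weighted_count_lower_bound:
  fixes a :: "nat \<Rightarrow> real" and \<alpha> :: real
  defines "S \<equiv> \<lambda>k. \<Sum>i<k. a i"
  assumes a: "\<And>i. 0 \<le> a i \<and> a i \<le> 1" and \<alpha>: "\<alpha> > 0" and n: "n \<ge> 1"
  shows "\<alpha> * (\<Sum>k=1..n. S k * real k powr (-\<alpha>-1)) - \<alpha> - 1 \<le> (\<Sum>k=1..n. a k * real k powr (-\<alpha>))"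
proof -
  define w where "w k = real k powr (-\<alpha>)" for k
  define v where "v k = real k powr (-\<alpha>-1)" for k
  have S_nn: "0 \<le> S k" for k unfolding S_def using a by (simp add: sum_nonneg)
  have S1: "S 1 \<le> 1" using a unfolding S_def by simp
  have "\<alpha> * (\<Sum>k=1..n. S k * v k) = \<alpha> * S 1 + (\<Sum>k\<in>{1..<n}. S (k+1) * (\<alpha> * v (k+1)))"
    using sum_split_first[OF n, of "\<lambda>k. S k * v k"]
    by (simp add: v_def sum_distrib_left algebra_simps)
  also have "\<dots> \<le> \<alpha> + (\<Sum>k\<in>{1..<n}. S (k+1) * (w k - w (k+1)))"
    using S1 \<alpha> S_nn powr_decrement_bounds(1)[of "real _" \<alpha>]
    by (intro add_mono sum_mono mult_left_mono) (auto simp: v_def w_def add.commute)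
  also have "\<dots> \<le> 1 + \<alpha> + (\<Sum>k=1..n. a k * w k)"
  proof -
    have "0 \<le> S (n+1) * w n" "S 1 * w 1 \<le> 1"
      using S_nn S1 by (auto simp: w_def)
    then show ?thesis
      using abel_summation[OF n, of a w] unfolding S_def by linarith
  qed
  finally show ?thesis by (simp add: v_def w_def)
qed

text \<open>Upper Abel bound:
  \<open>T\<^sub>n \<le> \<alpha> D\<^sub>n + \<alpha> \<Sum>k. k powr (-\<alpha>-1) + 1 + 2 powr (\<alpha>+1) (D\<^sub>2\<^sub>n - D\<^sub>n)\<close>;
  here \<open>a \<le> 1\<close> gives \<open>S (k+1) \<le> S k + 1\<close>, and the boundary term is handled by
  the dyadic block bound above.\<close>
lemma weighted_count_upper_bound:
  fixes a :: "nat \<Rightarrow> real" and \<alpha> :: real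
  defines "S \<equiv> \<lambda>k. \<Sum>i<k. a i"
    and "D \<equiv> \<lambda>n. \<Sum>k=1..n. (\<Sum>i<k. a i) * real k powr (-\<alpha>-1)"
  assumes a: "\<And>i. 0 \<le> a i \<and> a i \<le> 1" and \<alpha>: "\<alpha> > 0" and n: "n \<ge> 1"
  shows "(\<Sum>k=1..n. a k * real k powr (-\<alpha>))
           \<le> \<alpha> * D n + \<alpha> * (\<Sum>k. real k powr (-\<alpha>-1)) + 1 + 2 powr (\<alpha>+1) * (D (2*n) - D n)"
proof -
  define w where "w k = real k powr (-\<alpha>)" for k
  define v where "v k = real k powr (-\<alpha>-1)" for k
  have S_nn: "0 \<le> S k" for k unfolding S_def using a by (simp add: sum_nonneg)
  have S_Suc: "S (k+1) = S k + a k" for k by (simp add: S_def)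
  have S_mono: "mono S"
    unfolding S_def using a by (intro monoI sum_mono2) auto
  have summable_v: "summable v" unfolding v_def using \<alpha> by (simp add: summable_real_powr_iff)
  have boundary: "S (n+1) * w n \<le> 2 powr (\<alpha>+1) * (D (2*n) - D n) + 1"
  proof -
    have "w n \<le> 1" using powr_mono[of "-\<alpha>" 0 "real n"] n \<alpha> by (simp add: w_def)
    then have "a n * w n \<le> 1" using a[of n] by (simp add: w_def mult_le_one)
    moreover have "D (2*n) - D n = (\<Sum>k\<in>{n<..2*n}. S k * v k)"
    proof -
      have "{1..2*n} = {1..n} \<union> {n<..2*n}" by auto
      then show ?thesis unfolding D_def v_def S_def by (simp only:) (subst sum.union_disjoint; auto)
    qed
    ultimately show ?thesis
      using boundary_term_le_dyadic_block[OF S_mono S_nn _ n, of \<alpha>] \<alpha>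
      unfolding S_Suc by (simp add: w_def v_def distrib_right)
  qed
  have interior: "(\<Sum>k\<in>{1..<n}. S (k+1) * (w k - w (k+1))) \<le> \<alpha> * (D n + (\<Sum>k. v k))"
  proof -
    have "(\<Sum>k\<in>{1..<n}. S (k+1) * (w k - w (k+1))) \<le> (\<Sum>k\<in>{1..<n}. (S k + 1) * (\<alpha> * v k))"
    proof (intro sum_mono mult_mono)
      fix k assume "k \<in> {1..<n}"
      then show "w k - w (k+1) \<le> \<alpha> * v k"
        using powr_decrement_bounds(2)[of "real k" \<alpha>] \<alpha> by (simp add: w_def v_def add.commute)
      show "S (k+1) \<le> S k + 1" using S_Suc a[of k] by simp
    qed (use S_nn \<alpha> in \<open>auto simp: v_def w_def intro!: powr_mono2'\<close>)
    also have "\<dots> \<le> \<alpha> * (\<Sum>k=1..n. (S k + 1) * v k)"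
      using S_nn \<alpha> by (simp add: sum_distrib_left mult_ac)
        (intro sum_mono2, auto simp: v_def)
    also have "\<dots> \<le> \<alpha> * (D n + (\<Sum>k. v k))"
    proof -
      have "(\<Sum>k=1..n. v k) \<le> (\<Sum>k. v k)"
        by (rule sum_le_suminf[OF summable_v]) (auto simp: v_def)
      moreover have "(\<Sum>k=1..n. (S k + 1) * v k) = D n + (\<Sum>k=1..n. v k)"
        by (simp add: D_def v_def S_def distrib_right sum.distrib)
      ultimately show ?thesis
        using \<alpha> by (simp add: mult_left_mono)
    qed
    finally show ?thesis .
  qed
  have abel: "(\<Sum>k=1..n. a k * w k)
      = S (n+1) * w n - S 1 * w 1 + (\<Sum>k\<in>{1..<n}. S (k+1) * (w k - w (k+1)))"
    using abel_summation[OF n, of a w] unfolding S_def .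
  have "0 \<le> S 1 * w 1" using S_nn by (simp add: w_def)
  then have "(\<Sum>k=1..n. a k * w k) \<le> \<alpha> * D n + \<alpha> * (\<Sum>k. v k) + 1 + 2 powr (\<alpha>+1) * (D (2*n) - D n)"
    using abel boundary interior by (simp add: algebra_simps)
  then show ?thesis by (simp add: w_def v_def)
qed

text \<open>If \<open>f n / ln n \<rightarrow> L\<close>, then also \<open>f (2n) / ln n \<rightarrow> L\<close>, because \<open>ln (2n) / ln n \<rightarrow> 1\<close>.\<close>
lemma log_normalized_limit_doubling:
  fixes f :: "nat \<Rightarrow> real"
  assumes lim: "(\<lambda>n. f n / ln (real n)) \<longlonglongrightarrow> L"
  shows "(\<lambda>n. f (2*n) / ln (real n)) \<longlonglongrightarrow> L"
proof -
  have "(\<lambda>n. f (2*n) / ln (real (2*n))) \<longlonglongrightarrow> L"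
    using LIMSEQ_subseq_LIMSEQ[OF lim, of "\<lambda>n. 2*n"] by (simp add: strict_mono_def o_def)
  moreover have "(\<lambda>n::nat. ln (2 * real n) / ln (real n)) \<longlonglongrightarrow> 1" by real_asymp
  ultimately have "(\<lambda>n. f (2*n) / ln (real (2*n)) * (ln (2 * real n) / ln (real n))) \<longlonglongrightarrow> L * 1"
    by (intro tendsto_mult)
  moreover have "\<forall>\<^sub>F n in sequentially.
      f (2*n) / ln (real (2*n)) * (ln (2 * real n) / ln (real n)) = f (2*n) / ln (real n)"
    using eventually_gt_at_top[of "1::nat"] by eventually_elim (auto simp: field_simps)
  ultimately show ?thesis using Lim_transform_eventually by fastforce
qed

lemma tauberian_weighted_counts:
  fixes a :: "nat \<Rightarrow> real" and \<alpha> L :: real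
  defines "S \<equiv> \<lambda>k. \<Sum>i<k. a i"
  assumes a: "\<And>i. 0 \<le> a i \<and> a i \<le> 1" and \<alpha>: "\<alpha> > 0"
    and D_lim: "(\<lambda>n. (\<Sum>k=1..n. S k * real k powr (-\<alpha>-1)) / ln (real n)) \<longlonglongrightarrow> L"
  shows "(\<lambda>n. (\<Sum>k=1..n. a k * real k powr (-\<alpha>)) / ln (real n)) \<longlonglongrightarrow> \<alpha> * L"
proof -
  define D where "D n = (\<Sum>k=1..n. S k * real k powr (-\<alpha>-1))" for n
  define B where "B = (\<Sum>k. real k powr (-\<alpha>-1))"
  have D_lim': "(\<lambda>n. D n / ln (real n)) \<longlonglongrightarrow> L" using D_lim by (simp add: D_def)
  have D2_lim: "(\<lambda>n. D (2*n) / ln (real n)) \<longlonglongrightarrow> L"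
    by (rule log_normalized_limit_doubling[OF D_lim'])
  have inv_ln: "(\<lambda>n. 1 / ln (real n)) \<longlonglongrightarrow> 0" by real_asymp
  have lower: "(\<lambda>n. (\<alpha> * D n - (\<alpha> + 1)) / ln (real n)) \<longlonglongrightarrow> \<alpha> * L"
  proof -
    have "(\<lambda>n. \<alpha> * (D n / ln (real n)) - (\<alpha> + 1) * (1 / ln (real n))) \<longlonglongrightarrow> \<alpha> * L - (\<alpha> + 1) * 0"
      by (intro tendsto_intros D_lim' inv_ln)
    then show ?thesis by (simp add: diff_divide_distrib)
  qed
  have upper: "(\<lambda>n. (\<alpha> * D n + \<alpha> * B + 1 + 2 powr (\<alpha>+1) * (D (2*n) - D n)) / ln (real n)) \<longlonglongrightarrow> \<alpha> * L"
  proof -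
    have "(\<lambda>n. \<alpha> * (D n / ln (real n)) + (\<alpha> * B + 1) * (1 / ln (real n))
             + 2 powr (\<alpha>+1) * (D (2*n) / ln (real n) - D n / ln (real n)))
          \<longlonglongrightarrow> \<alpha> * L + (\<alpha> * B + 1) * 0 + 2 powr (\<alpha>+1) * (L - L)"
      by (intro tendsto_intros D_lim' D2_lim inv_ln)
    then show ?thesis by (simp add: add_divide_distrib diff_divide_distrib algebra_simps)
  qed
  show ?thesis
  proof (rule tendsto_sandwich[OF _ _ lower upper])
    show "\<forall>\<^sub>F n in sequentially. (\<alpha> * D n - (\<alpha> + 1)) / ln (real n)
            \<le> (\<Sum>k=1..n. a k * real k powr (-\<alpha>)) / ln (real n)"
      using eventually_gt_at_top[of "1::nat"]
    proof eventually_elim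
      case (elim n)
      then show ?case
        using weighted_count_lower_bound[of a \<alpha> n] a \<alpha>
        by (intro divide_right_mono) (auto simp: D_def S_def)
    qed
    show "\<forall>\<^sub>F n in sequentially. (\<Sum>k=1..n. a k * real k powr (-\<alpha>)) / ln (real n)
            \<le> (\<alpha> * D n + \<alpha> * B + 1 + 2 powr (\<alpha>+1) * (D (2*n) - D n)) / ln (real n)"
      using eventually_gt_at_top[of "1::nat"]
    proof eventually_elim
      case (elim n)
      then show ?case
        using weighted_count_upper_bound[of a \<alpha> n] a \<alpha>
        by (intro divide_right_mono) (auto simp: D_def S_def B_def)
    qed
  qed
qed

lemma shift_power_apply: "(shift ^^ i) x = (\<lambda>j. x (j + int i))"
  by (induction i) (auto simp: shift_def algebra_simps)

lemma orbit_weighted_visits: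
  fixes x :: "int \<Rightarrow> nat" and b :: nat and \<alpha> c m :: real
  assumes \<alpha>: "\<alpha> > 0" and c: "c > 0"
    and averages: "(\<lambda>n. (1 / ln (real n)) *
        (\<Sum>k=1..n. (\<Sum>i<k. indicator (cyl b) ((shift ^^ i) x)) / (c * real k powr (\<alpha> + 1)))) \<longlonglongrightarrow> m"
  shows "(\<lambda>n. (1 / ln (real n)) *
           (\<Sum>k\<in>{k. 1 \<le> k \<and> k \<le> n \<and> x (int k) = b}. 1 / real k powr \<alpha>)) \<longlonglongrightarrow> \<alpha> * c * m"
proof -
  define a where "a i = (if x (int i) = b then 1 else 0 :: real)" for i
  have visits: "indicator (cyl b) ((shift ^^ i) x) = a i" for i
    by (simp add: a_def shift_power_apply cyl_def indicator_def)
  have rescaled: "c * ((1 / ln (real n)) *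
        (\<Sum>k=1..n. (\<Sum>i<k. a i) / (c * real k powr (\<alpha> + 1))))
      = (\<Sum>k=1..n. (\<Sum>i<k. a i) * real k powr (-\<alpha>-1)) / ln (real n)" for n
  proof -
    have neg_exp: "real k powr (-\<alpha>-1) = 1 / real k powr (\<alpha> + 1)" for k
    proof -
      have "-\<alpha>-1 = -(\<alpha>+1)" by simp
      then show ?thesis by (simp only: powr_minus_divide)
    qed
    have "(\<Sum>k=1..n. (\<Sum>i<k. a i) / (c * real k powr (\<alpha> + 1)))
        = (\<Sum>k=1..n. (\<Sum>i<k. a i) * real k powr (-\<alpha>-1)) / c"
      unfolding sum_divide_distrib[of _ "{1..n}"] by (intro sum.cong) (simp_all add: neg_exp)
    then show ?thesis using c by simp
  qed
  have "(\<lambda>n. (\<Sum>k=1..n. (\<Sum>i<k. a i) * real k powr (-\<alpha>-1)) / ln (real n)) \<longlonglongrightarrow> c * m"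
    using tendsto_mult_left[OF averages, of c] unfolding visits rescaled .
  then have "(\<lambda>n. (\<Sum>k=1..n. a k * real k powr (-\<alpha>)) / ln (real n)) \<longlonglongrightarrow> \<alpha> * (c * m)"
    by (intro tauberian_weighted_counts \<alpha>) (simp add: a_def)
  moreover have "(\<Sum>k\<in>{k. 1 \<le> k \<and> k \<le> n \<and> x (int k) = b}. 1 / real k powr \<alpha>)
      = (\<Sum>k=1..n. a k * real k powr (-\<alpha>))" for n
  proof -
    have visit_times: "{k. 1 \<le> k \<and> k \<le> n \<and> x (int k) = b} = {k\<in>{1..n}. x (int k) = b}"
      by auto
    have "(\<Sum>k\<in>{k. 1 \<le> k \<and> k \<le> n \<and> x (int k) = b}. 1 / real k powr \<alpha>)
        = (\<Sum>k=1..n. if x (int k) = b then 1 / real k powr \<alpha> else 0)"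
      unfolding visit_times by (rule sum.inter_filter) simp
    also have "\<dots> = (\<Sum>k=1..n. a k * real k powr (-\<alpha>))"
      by (intro sum.cong) (simp_all add: a_def powr_minus_divide)
    finally show ?thesis .
  qed
  ultimately show ?thesis by (simp add: mult.assoc)
qed

lemma cylinder_indicator_integrable:
  fixes \<nu> :: "(int \<Rightarrow> nat) measure"
  assumes sets: "sets \<nu> = sets (subshift_space N \<sigma>)" and b: "b \<in> {1..N}"
    and finite: "emeasure \<nu> (cyl b \<inter> space \<nu>) < \<infinity>"
  shows "integrable \<nu> (indicator (cyl b) :: (int \<Rightarrow> nat) \<Rightarrow> real)"
proof -
  have "(\<lambda>x::int\<Rightarrow>nat. x 0) \<in> measurable (subshift_space N \<sigma>) (count_space {1..N})"
    unfolding subshift_space_def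
    by (intro measurable_restrict_space1 measurable_component_singleton) simp
  then have "(\<lambda>x::int\<Rightarrow>nat. x 0) \<in> measurable \<nu> (count_space {1..N})"
    by (subst measurable_cong_sets[OF sets refl])
  from measurable_sets[OF this, of "{b}"] b have "cyl b \<inter> space \<nu> \<in> sets \<nu>"
    by (simp add: cyl_def vimage_def Int_def)
  then have "integrable \<nu> (indicator (cyl b \<inter> space \<nu>) :: (int \<Rightarrow> nat) \<Rightarrow> real)"
    using finite by (intro integrable_real_indicator) auto
  moreover have "integrable \<nu> (indicator (cyl b) :: (int \<Rightarrow> nat) \<Rightarrow> real)
      = integrable \<nu> (indicator (cyl b \<inter> space \<nu>) :: (int \<Rightarrow> nat) \<Rightarrow> real)"
    by (rule Bochner_Integration.integrable_cong) (auto simp: indicator_def)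
  ultimately show ?thesis by simp
qed

theorem mainTheorem12:
  fixes N :: nat and \<sigma> :: "nat \<Rightarrow> nat list" and Bs :: "nat set"
    and \<nu> :: "(int \<Rightarrow> nat) measure" and \<xi> :: "nat \<Rightarrow> real" and c :: real
  assumes adm: "admissible N \<sigma> Bs"
    and \<xi>_pos: "\<forall>i\<in>{1..N}. \<xi> i > 0"
    and \<xi>_lim: "\<forall>i\<in>{1..N}. (\<lambda>k. real (length (subst_iter \<sigma> k i)) /
                   (\<xi> i * rho (blockA N \<sigma> Bs) ^ k)) \<longlonglongrightarrow> 1"
    and \<nu>_sets: "sets \<nu> = sets (subshift_space N \<sigma>)"
    and \<nu>_space: "space \<nu> = subshift N \<sigma>"
    and \<nu>_sfin: "sigma_finite_measure \<nu>"
    and \<nu>_inf: "emeasure \<nu> (space \<nu>) = \<infinity>"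
    and \<nu>_meas: "shift \<in> \<nu> \<rightarrow>\<^sub>M \<nu>"
    and \<nu>_inv: "distr \<nu> \<nu> shift = \<nu>"
    and \<nu>_cyl: "\<forall>b\<in>Bs. 0 < emeasure \<nu> (cyl b \<inter> space \<nu>) \<and> emeasure \<nu> (cyl b \<inter> space \<nu>) < \<infinity>"
    and \<nu>_norm: "(\<Sum>b\<in>Bs. \<xi> b * measure \<nu> (cyl b \<inter> space \<nu>)) = 1"
    and c_pos: "c > 0"
    and c_ergodic: "\<forall>f::(int \<Rightarrow> nat) \<Rightarrow> real. integrable \<nu> f \<longrightarrow>
          (AE x in \<nu>. (\<lambda>n. (1 / ln (real n)) *
              (\<Sum>k=1..n. (\<Sum>i<k. f ((shift ^^ i) x)) /
                 (c * real k powr (ln (rho (blockB N \<sigma> Bs)) / ln (rho (blockA N \<sigma> Bs)) + 1))))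
             \<longlonglongrightarrow> integral\<^sup>L \<nu> f)"
  shows "\<forall>b\<in>Bs. AE x in \<nu>.
           (\<lambda>n. (1 / ln (real n)) *
              (\<Sum>k\<in>{k. 1 \<le> k \<and> k \<le> n \<and> x (int k) = b}.
                 1 / real k powr (ln (rho (blockB N \<sigma> Bs)) / ln (rho (blockA N \<sigma> Bs)))))
           \<longlonglongrightarrow> (ln (rho (blockB N \<sigma> Bs)) / ln (rho (blockA N \<sigma> Bs))) * c * measure \<nu> (cyl b \<inter> space \<nu>)"
proof
  fix b assume b: "b \<in> Bs"
  define \<alpha> where "\<alpha> = ln (rho (blockB N \<sigma> Bs)) / ln (rho (blockA N \<sigma> Bs))"
  have \<alpha>_pos: "\<alpha> > 0"
  proof -
    have "1 < rho (blockB N \<sigma> Bs)" "rho (blockB N \<sigma> Bs) < rho (blockA N \<sigma> Bs)"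
      using adm unfolding admissible_def by auto
    then show ?thesis unfolding \<alpha>_def by (intro divide_pos_pos) auto
  qed
  have "b \<in> {1..N}" using adm b unfolding admissible_def by auto
  then have integrable: "integrable \<nu> (indicator (cyl b) :: (int \<Rightarrow> nat) \<Rightarrow> real)"
    using cylinder_indicator_integrable[OF \<nu>_sets] \<nu>_cyl b by blast
  have "AE x in \<nu>. (\<lambda>n. (1 / ln (real n)) *
      (\<Sum>k=1..n. (\<Sum>i<k. indicator (cyl b) ((shift ^^ i) x)) / (c * real k powr (\<alpha> + 1))))
        \<longlonglongrightarrow> measure \<nu> (cyl b \<inter> space \<nu>)"
    using c_ergodic[rule_format, OF integrable]
    unfolding \<alpha>_def Bochner_Integration.integral_indicator .
  then show "AE x in \<nu>. (\<lambda>n. (1 / ln (real n)) *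
      (\<Sum>k\<in>{k. 1 \<le> k \<and> k \<le> n \<and> x (int k) = b}.
         1 / real k powr (ln (rho (blockB N \<sigma> Bs)) / ln (rho (blockA N \<sigma> Bs)))))
      \<longlonglongrightarrow> (ln (rho (blockB N \<sigma> Bs)) / ln (rho (blockA N \<sigma> Bs))) * c * measure \<nu> (cyl b \<inter> space \<nu>)"
    unfolding \<alpha>_def[symmetric]
    by (rule eventually_mono) (rule orbit_weighted_visits[OF \<alpha>_pos c_pos])
qed

end
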